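(* Let $Q(x,y,Z)=(x-1)^2(y-1)^2-\dfrac{(Z-1)^4}{Z^2}xy$ and $D_Q=\{(x,y,Z)\in(\mathbb{C}^\times)^3 : Q(x,y,Z)=0,\ |x|=|y|=1,\ |Z|>1\}$. The map $(x,y,Z)\mapsto Z$ defines a fibration of $D_Q\setminus\{(-1,-1,3+2\sqrt2)\}$ above the interval $(1,3+2\sqrt2)$. *)

theory Defs
  imports "HOL-Analysis.Analysis"
begin

definition Q :: "complex \<Rightarrow> complex \<Rightarrow> complex \<Rightarrow> complex" where
  "Q x y Z = (x - 1)^2 * (y - 1)^2 - ((Z - 1)^4 / Z^2) * x * y"

definition D_Q :: "(complex \<times> complex \<times> complex) set" where
  "D_Q = {(x, y, Z). x \<noteq> 0 \<and> y \<noteq> 0 \<and> Z \<noteq> 0 \<and> Q x y Z = 0 \<and>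
                     norm x = 1 \<and> norm y = 1 \<and> norm Z > 1}"

definition locally_trivial_fibration ::
  "('a::topological_space) set \<Rightarrow> ('a \<Rightarrow> 'b::topological_space) \<Rightarrow> 'b set \<Rightarrow> bool" where
  "locally_trivial_fibration E p B \<longleftrightarrow>
     continuous_on E p \<and> p ` E = B \<and>
     (\<forall>b\<in>B. \<exists>U. openin (top_of_set B) U \<and> b \<in> U \<and>
        (\<exists>(F :: 'a set) h k. homeomorphism (E \<inter> p -` U) (U \<times> F) h k \<and>
              (\<forall>e \<in> E \<inter> p -` U. fst (h e) = p e)))"

end

theory Submission
  imports Defs
begin

text \<open>
  Write a point of the unit circle other than 1 as x = -w^2 with w on the open right half circle,
  and put p = Im w. Since w cnj w = 1, one gets (x - 1)^2 = -4 (1 - p^2) x, so on the torus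
  Q(x, y, Z) = 0 reads ((Z - 1)^2 / Z)^2 = 16 (1 - p^2)(1 - q^2), a number in (0, 16].
  As |Z| > 1, this forces Z to be real, Z = z > 1, with ((z - 1)^2 / (4 z))^2 = (1 - p^2)(1 - q^2);
  the left side is < 1 exactly for z < 3 + 2 sqrt 2, and = 1 only at the excluded point.
  So the space is the family over z \<in> (1, 3 + 2 sqrt 2) of the ovals (1 - p^2)(1 - q^2) = c(z) in the
  open square, and the substitution p' = sqrt k p, q' = q sqrt (k (1 - p^2) / (1 - k p^2)), which turns
  the oval of level c into that of level 1 - k (1 - c), straightens the family into a product.
\<close>

lemma homeomorphism_imp_locally_trivial_fibration:
  fixes E F :: "'a::topological_space set"
  assumes hom: "homeomorphism E (B \<times> F) h k"
    and fst_h: "\<And>e. e \<in> E \<Longrightarrow> fst (h e) = p e"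
    and "F \<noteq> {}"
  shows "locally_trivial_fibration E p B"
proof -
  have "continuous_on E (fst \<circ> h)"
    using homeomorphism_cont1[OF hom] by (intro continuous_on_compose continuous_intros)
  then have cont: "continuous_on E p"
    by (rule continuous_on_eq) (simp add: fst_h)
  have "p ` E = fst ` h ` E"
    by (simp add: image_image fst_h cong: image_cong)
  also have "\<dots> = B"
    using homeomorphism_image1[OF hom] \<open>F \<noteq> {}\<close> by simp
  finally have onto: "p ` E = B" .
  have whole: "E \<inter> p -` B = E"
    using onto by blast
  show ?thesis
    unfolding locally_trivial_fibration_def
  proof (intro conjI cont onto ballI)
    fix b assume "b \<in> B"
    with hom whole fst_h show "\<exists>U. openin (top_of_set B) U \<and> b \<in> U \<and>
        (\<exists>(F :: 'a set) h k. homeomorphism (E \<inter> p -` U) (U \<times> F) h k \<and>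
           (\<forall>e \<in> E \<inter> p -` U. fst (h e) = p e))"
      by (intro exI[of _ B] conjI exI[of _ F] exI[of _ h] exI[of _ k]) auto
  qed
qed

definition level :: "real \<Rightarrow> (real \<times> real) set" where
  "level c = {(p, q). p^2 < 1 \<and> q^2 < 1 \<and> (1 - p^2) * (1 - q^2) = c}"

definition rescale :: "real \<Rightarrow> real \<times> real \<Rightarrow> real \<times> real" where
  "rescale k = (\<lambda>(p, q). (sqrt k * p, q * sqrt (k * (1 - p^2) / (1 - k * p^2))))"

lemma rescale_defect:
  assumes "0 \<le> k" "p^2 \<le> 1" "k * p^2 < 1"
  shows "(1 - (fst (rescale k (p, q)))^2) * (1 - (snd (rescale k (p, q)))^2)
           = 1 - k * (1 - (1 - p^2) * (1 - q^2))"
proof -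
  define r where "r = k * (1 - p^2) / (1 - k * p^2)"
  have r: "(1 - k * p^2) * r = k * (1 - p^2)"
    using assms(3) by (simp add: r_def)
  have "(fst (rescale k (p, q)))^2 = k * p^2"
    using assms by (simp add: rescale_def power_mult_distrib)
  moreover have "(snd (rescale k (p, q)))^2 = q^2 * r"
    using assms by (simp add: rescale_def r_def power_mult_distrib)
  ultimately have "(1 - (fst (rescale k (p, q)))^2) * (1 - (snd (rescale k (p, q)))^2)
      = (1 - k * p^2) - q^2 * ((1 - k * p^2) * r)"
    by (simp add: algebra_simps)
  then show ?thesis
    unfolding r by (simp add: algebra_simps)
qed

lemma rescale_mem_level:
  assumes "0 < k" "k * (1 - g) = 1 - h" "0 < h" "(p, q) \<in> level g"
  shows "rescale k (p, q) \<in> level h" "k * p^2 < 1"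
proof -
  have pq: "p^2 < 1" "q^2 < 1" "(1 - p^2) * (1 - q^2) = g"
    using assms(4) by (simp_all add: level_def)
  have "(1 - p^2) * (1 - q^2) \<le> (1 - p^2) * 1"
    using pq by (intro mult_left_mono) auto
  then have "g \<le> 1 - p^2"
    using pq by simp
  then have "k * p^2 \<le> k * (1 - g)"
    using assms(1) by (intro mult_left_mono) auto
  then show kp: "k * p^2 < 1"
    using assms(2,3) by linarith
  obtain p' q' where pq': "rescale k (p, q) = (p', q')"
    by fastforce
  have "p'^2 = k * p^2"
    using pq' assms(1) by (auto simp: rescale_def power_mult_distrib)
  moreover have "(1 - p'^2) * (1 - q'^2) = h"
    using rescale_defect[of k p q] pq' pq kp assms(1,2) by simp
  ultimately have "p'^2 < 1" "q'^2 < 1"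
    using kp assms(3) by (auto simp: zero_less_mult_iff)
  then show "rescale k (p, q) \<in> level h"
    using pq' \<open>(1 - p'^2) * (1 - q'^2) = h\<close> by (simp add: level_def)
qed

lemma rescale_rescale:
  assumes "0 < k" "k * l = 1" "p^2 < 1" "k * p^2 < 1"
  shows "rescale l (rescale k (p, q)) = (p, q)"
proof -
  have l: "l = 1 / k"
    using assms(1,2) by (simp add: field_simps)
  have "sqrt l * (sqrt k * p) = p"
    using assms(1) by (simp add: l real_sqrt_divide)
  moreover have "sqrt (k * (1 - p^2) / (1 - k * p^2)) * sqrt (l * (1 - (sqrt k * p)^2) / (1 - l * (sqrt k * p)^2)) = 1"
  proof -
    have "l * (1 - (sqrt k * p)^2) / (1 - l * (sqrt k * p)^2) = (1 - k * p^2) / (k * (1 - p^2))"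
      using assms by (simp add: l power_mult_distrib field_simps)
    then show ?thesis
      using assms by (simp flip: real_sqrt_mult)
  qed
  ultimately show ?thesis
    by (simp add: rescale_def mult.assoc)
qed

lemma continuous_on_rescale [continuous_intros]:
  assumes "continuous_on S k" "continuous_on S v" "\<And>x. x \<in> S \<Longrightarrow> k x * (fst (v x))^2 \<noteq> 1"
  shows "continuous_on S (\<lambda>x. rescale (k x) (v x))"
  unfolding rescale_def split_beta using assms by (intro continuous_intros) auto

lemma rescale_level_roundtrip:
  assumes "0 < a" "a < 1" "0 < b" "b < 1" "v \<in> level a"
  shows "rescale ((1 - b) / (1 - a)) v \<in> level b" "(1 - b) / (1 - a) * (fst v)^2 < 1"
    "rescale ((1 - a) / (1 - b)) (rescale ((1 - b) / (1 - a)) v) = v"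
proof -
  obtain p q where v: "v = (p, q)"
    by fastforce
  have k: "0 < (1 - b) / (1 - a)" "(1 - b) / (1 - a) * (1 - a) = 1 - b"
    "(1 - b) / (1 - a) * ((1 - a) / (1 - b)) = 1"
    using assms(1-4) by simp_all
  show "rescale ((1 - b) / (1 - a)) v \<in> level b" "(1 - b) / (1 - a) * (fst v)^2 < 1"
    using rescale_mem_level[OF k(1,2) assms(3)] assms(5) v by simp_all
  then show "rescale ((1 - a) / (1 - b)) (rescale ((1 - b) / (1 - a)) v) = v"
    using rescale_rescale[OF k(1,3)] assms(5) v by (simp add: level_def)
qed

lemma homeomorphism_rescale_levels:
  assumes g: "continuous_on I g" "\<And>z. z \<in> I \<Longrightarrow> 0 < g z \<and> g z < 1"
    and h: "0 < h" "h < 1"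
  shows "homeomorphism (SIGMA z:I. level (g z)) (I \<times> level h)
           (\<lambda>(z, v). (z, rescale ((1 - h) / (1 - g z)) v))
           (\<lambda>(z, v). (z, rescale ((1 - g z) / (1 - h)) v))"
proof -
  note fwd = rescale_level_roundtrip[OF conjunct1[OF g(2)] conjunct2[OF g(2)] h]
    and bwd = rescale_level_roundtrip[OF h conjunct1[OF g(2)] conjunct2[OF g(2)]]
  have fwd_ne: "(1 - h) / (1 - g (fst x)) * (fst (snd x))^2 \<noteq> 1"
    if "x \<in> (SIGMA z:I. level (g z))" for x
    using that fwd(2) by (metis SigmaE fst_conv snd_conv less_irrefl)
  have bwd_ne: "(1 - g (fst x)) / (1 - h) * (fst (snd x))^2 \<noteq> 1"
    if "x \<in> I \<times> level h" for x
    using that bwd(2) by (metis SigmaE fst_conv snd_conv less_irrefl)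
  show ?thesis
  proof (rule homeomorphismI)
    show "continuous_on (SIGMA z:I. level (g z)) (\<lambda>(z, v). (z, rescale ((1 - h) / (1 - g z)) v))"
      unfolding split_beta
      by (intro continuous_intros continuous_on_compose2[OF g(1)] fwd_ne)
        (use h in \<open>auto dest: g(2)\<close>)
    show "continuous_on (I \<times> level h) (\<lambda>(z, v). (z, rescale ((1 - g z) / (1 - h)) v))"
      unfolding split_beta
      by (intro continuous_intros continuous_on_compose2[OF g(1)] bwd_ne)
        (use h in \<open>auto dest: g(2)\<close>)
  qed (use fwd bwd in auto)
qed

definition z_crit :: real where
  "z_crit = 3 + 2 * sqrt 2"

definition fibre_level :: "real \<Rightarrow> real" where
  "fibre_level z = ((z - 1)^2 / (4 * z))^2"

lemma z_crit_threshold: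
  fixes z :: real
  assumes "1 < z"
  shows "(z - 1)^2 < 4 * z \<longleftrightarrow> z < z_crit" "(z - 1)^2 = 4 * z \<longleftrightarrow> z = z_crit"
proof -
  define d where "d = z - (3 - 2 * sqrt 2)"
  have factor: "(z - 1)^2 - 4 * z = (z - z_crit) * d"
    by (simp add: z_crit_def d_def algebra_simps power2_eq_square)
  have "1 < sqrt (2::real)"
    by simp
  then have "0 < d"
    using assms unfolding d_def by linarith
  have "(z - 1)^2 < 4 * z \<longleftrightarrow> (z - z_crit) * d < 0"
    using factor by auto
  also have "\<dots> \<longleftrightarrow> z < z_crit"
    using \<open>0 < d\<close> by (simp add: mult_less_0_iff)
  finally show "(z - 1)^2 < 4 * z \<longleftrightarrow> z < z_crit" .
  have "(z - 1)^2 = 4 * z \<longleftrightarrow> (z - z_crit) * d = 0"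
    using factor by auto
  also have "\<dots> \<longleftrightarrow> z = z_crit"
    using \<open>0 < d\<close> by simp
  finally show "(z - 1)^2 = 4 * z \<longleftrightarrow> z = z_crit" .
qed

lemma fibre_level_pos: "1 < z \<Longrightarrow> 0 < fibre_level z"
  by (simp add: fibre_level_def)

lemma fibre_level_less_one_iff: "1 < z \<Longrightarrow> fibre_level z < 1 \<longleftrightarrow> z < z_crit"
  using z_crit_threshold(1)[of z]
  by (simp add: fibre_level_def power_less_one_iff abs_square_less_1 divide_less_eq)

lemma fibre_level_eq_one_iff:
  assumes "1 < z"
  shows "fibre_level z = 1 \<longleftrightarrow> z = z_crit"
proof -
  have "0 \<le> (z - 1)^2 / (4 * z)"
    using assms by simp
  then have "fibre_level z = 1 \<longleftrightarrow> (z - 1)^2 / (4 * z) = 1"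
    unfolding fibre_level_def by (auto simp: power2_eq_1_iff)
  also have "\<dots> \<longleftrightarrow> (z - 1)^2 = 4 * z"
    using assms by (auto simp: divide_eq_1_iff)
  finally show ?thesis
    using z_crit_threshold(2)[OF assms] by auto
qed

lemma level_one: "level 1 = {(0, 0)}"
proof -
  have zero: "p = 0 \<and> q = 0" if "p^2 < 1" "q^2 < 1" "(1 - p^2) * (1 - q^2) = 1" for p q :: real
  proof -
    have "(1 - p^2) * (1 - q^2) \<le> (1 - p^2) * 1"
      using that by (intro mult_left_mono) simp_all
    moreover have "(1 - p^2) * (1 - q^2) \<le> 1 * (1 - q^2)"
      using that by (intro mult_right_mono) simp_all
    ultimately have "p^2 = 0" "q^2 = 0"
      using that(3) by simp_all
    then show ?thesis
      by simp
  qed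
  then show ?thesis
    unfolding level_def by (auto dest: zero)
qed

lemma level_bounds:
  assumes "v \<in> level c"
  shows "0 < c" "c \<le> 1"
proof -
  obtain p q where "p^2 < 1" "q^2 < 1" and c: "(1 - p^2) * (1 - q^2) = c"
    using assms by (auto simp: level_def)
  then have "0 < 1 - p^2" "0 < 1 - q^2" "1 - p^2 \<le> 1" "1 - q^2 \<le> 1"
    by simp_all
  then show "0 < c" "c \<le> 1"
    unfolding c[symmetric] by (simp_all add: mult_le_one less_imp_le)
qed

lemma less_z_crit_if_mem_level:
  assumes "1 < z" "v \<in> level (fibre_level z)" "v \<noteq> (0, 0)"
  shows "z < z_crit"
proof -
  have "fibre_level z \<noteq> 1"
  proof
    assume "fibre_level z = 1"
    then have "v \<in> level 1"
      using assms(2) by simp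
    then show False
      using assms(3) by (simp add: level_one)
  qed
  moreover have "fibre_level z \<le> 1"
    using level_bounds(2)[OF assms(2)] .
  ultimately show ?thesis
    using fibre_level_less_one_iff[OF assms(1)] by simp
qed

definition circle_param :: "real \<Rightarrow> complex" where
  "circle_param p = - ((Complex (sqrt (1 - p^2)) p)^2)"

lemma circle_param_minus_one_sq:
  assumes "p^2 \<le> 1"
  shows "(circle_param p - 1)^2 = - 4 * of_real (1 - p^2) * circle_param p"
proof -
  define a where "a = sqrt (1 - p^2)"
  define w where "w = Complex a p"
  have x: "circle_param p = - (w^2)"
    by (simp add: circle_param_def w_def a_def)
  have "w * cnj w = 1"
    using assms by (simp add: w_def a_def complex_mult_cnj)
  then have "circle_param p - 1 = - w * (w + cnj w)"
    unfolding x by (simp add: algebra_simps power2_eq_square)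
  also have "w + cnj w = 2 * of_real a"
    by (simp add: w_def complex_add_cnj)
  finally have "(circle_param p - 1)^2 = 4 * (of_real a)^2 * w^2"
    by (simp add: power_mult_distrib)
  also have "(of_real a)^2 = (of_real (1 - p^2) :: complex)"
    using assms by (simp add: a_def flip: of_real_power)
  finally show ?thesis
    unfolding x by (simp add: algebra_simps)
qed

lemma norm_circle_param:
  assumes "p^2 \<le> 1"
  shows "norm (circle_param p) = 1"
proof -
  have "norm (circle_param p) = (norm (Complex (sqrt (1 - p^2)) p))^2"
    by (simp add: circle_param_def norm_power)
  also have "\<dots> = 1"
    using assms by (simp add: cmod_def)
  finally show ?thesis .
qed

lemma csqrt_neg_circle_param:
  "p^2 < 1 \<Longrightarrow> csqrt (- circle_param p) = Complex (sqrt (1 - p^2)) p"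
  by (simp add: circle_param_def csqrt_unique)

lemma circle_param_Im_csqrt:
  assumes "norm x = 1" "x \<noteq> 1"
  shows "(Im (csqrt (- x)))^2 < 1" "circle_param (Im (csqrt (- x))) = x"
proof -
  define w where "w = csqrt (- x)"
  have x: "x = - (w^2)"
    by (simp add: w_def)
  then have norm: "(Re w)^2 + (Im w)^2 = 1"
    using assms(1) by (simp add: norm_power flip: cmod_power2)
  have "Re w \<noteq> 0"
  proof
    assume "Re w = 0"
    then have "x = of_real ((Im w)^2)"
      using x by (simp add: complex_eq_iff power2_eq_square)
    moreover have "(Im w)^2 = 1"
      using norm \<open>Re w = 0\<close> by simp
    ultimately show False
      using assms(2) by (metis of_real_1)
  qed
  then have "0 < (Re w)^2"
    by simp
  then have "(Im w)^2 < 1"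
    using norm by linarith
  moreover have "0 \<le> Re w"
    unfolding w_def by (rule Re_csqrt)
  then have "sqrt (1 - (Im w)^2) = Re w"
    using norm by (intro real_sqrt_unique) auto
  ultimately show "(Im (csqrt (- x)))^2 < 1" "circle_param (Im (csqrt (- x))) = x"
    unfolding w_def[symmetric] circle_param_def by (simp_all add: x)
qed

lemma Q_swap: "Q x y Z = Q y x Z"
  by (simp add: Q_def algebra_simps)

lemma Q_zero_imp_ne_one:
  assumes "Q x y Z = 0" "y \<noteq> 0" "1 < norm Z"
  shows "x \<noteq> 1"
proof
  assume "x = 1"
  then have "(Z - 1)^4 / Z^2 * y = 0"
    using assms(1) by (simp add: Q_def)
  then have "Z = 1"
    using assms(2,3) by auto
  then show False
    using assms(3) by simp
qed

lemma D_Q_ne_one: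
  assumes "(x, y, Z) \<in> D_Q"
  shows "x \<noteq> 1" "y \<noteq> 1"
  using assms Q_zero_imp_ne_one[of x y Z] Q_zero_imp_ne_one[of y x Z]
  by (auto simp: D_Q_def Q_swap[of y])

lemma Q_circle_param:
  assumes "p^2 \<le> 1" "q^2 \<le> 1"
  shows "Q (circle_param p) (circle_param q) Z
           = circle_param p * circle_param q * (of_real (16 * ((1 - p^2) * (1 - q^2))) - ((Z - 1)^2 / Z)^2)"
proof -
  have "(Z - 1)^4 / Z^2 = ((Z - 1)^2 / Z)^2"
    by (simp add: power_divide flip: power_mult)
  then show ?thesis
    unfolding Q_def circle_param_minus_one_sq[OF assms(1)] circle_param_minus_one_sq[OF assms(2)]
    by (simp add: algebra_simps)
qed

lemma Q_circle_param_eq_0_iff: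
  assumes "p^2 \<le> 1" "q^2 \<le> 1"
  shows "Q (circle_param p) (circle_param q) Z = 0
           \<longleftrightarrow> ((Z - 1)^2 / Z)^2 = of_real (16 * ((1 - p^2) * (1 - q^2)))"
proof -
  have "circle_param p \<noteq> 0" "circle_param q \<noteq> 0"
    using norm_circle_param assms by (metis norm_zero zero_neq_one)+
  then have "Q (circle_param p) (circle_param q) Z = 0
      \<longleftrightarrow> of_real (16 * ((1 - p^2) * (1 - q^2))) - ((Z - 1)^2 / Z)^2 = 0"
    unfolding Q_circle_param[OF assms] by simp
  then show ?thesis
    by auto
qed

lemma Im_add_inverse: "Im (Z + inverse Z) = Im Z * (1 - 1 / (norm Z)^2)"
  by (simp add: cmod_power2 right_diff_distrib)

lemma Im_eq_0_if_square_nonneg: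
  fixes K :: complex
  assumes "K^2 = of_real r" "0 \<le> r"
  shows "Im K = 0"
proof -
  have "Re K * Im K = 0" "(Re K)^2 - (Im K)^2 = r"
    using assms(1) by (auto simp: complex_eq_iff power2_eq_square)
  show ?thesis
  proof (rule ccontr)
    assume "Im K \<noteq> 0"
    then have "Re K = 0"
      using \<open>Re K * Im K = 0\<close> by simp
    then have "- ((Im K)^2) = r"
      using \<open>(Re K)^2 - (Im K)^2 = r\<close> by simp
    then have "(Im K)^2 \<le> 0"
      using assms(2) by linarith
    then show False
      using \<open>Im K \<noteq> 0\<close> by simp
  qed
qed

lemma Im_eq_0_if_Im_add_inverse_eq_0:
  fixes Z :: complex
  assumes "norm Z \<noteq> 1" "Im (Z + inverse Z) = 0"
  shows "Im Z = 0"
proof -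
  have "Im Z * (1 - 1 / (norm Z)^2) = 0"
    using assms(2) by (simp only: Im_add_inverse)
  moreover have "1 / (norm Z)^2 \<noteq> 1"
  proof
    assume "1 / (norm Z)^2 = 1"
    then have "(norm Z)^2 = 1^2"
      by (simp add: divide_eq_1_iff)
    then show False
      using assms(1) power2_eq_imp_eq[of "norm Z" 1] by simp
  qed
  ultimately show ?thesis
    by auto
qed

lemma one_less_if_sq_quotient_le:
  fixes z :: real
  assumes "1 < \<bar>z\<bar>" "((z - 1)^2 / z)^2 \<le> 16"
  shows "1 < z"
proof (rule ccontr)
  assume "\<not> 1 < z"
  then have "z < 0" "0 < (z + 1)^2"
    using assms(1) by auto
  then have "(z + 1)^2 / z < 0"
    by (simp add: divide_pos_neg)
  moreover have "(z + 1)^2 / z = (z - 1)^2 / z + 4"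
    using \<open>z < 0\<close> by (simp add: field_simps power2_eq_square)
  ultimately have "4^2 < (- ((z - 1)^2 / z))^2"
    by (intro power_strict_mono) auto
  then have "16 < ((z - 1)^2 / z)^2"
    by simp
  then show False
    using assms(2) by linarith
qed

lemma real_base_point:
  fixes Z :: complex
  assumes "1 < norm Z" "((Z - 1)^2 / Z)^2 = of_real (16 * c)" "0 \<le> c" "c \<le> 1"
  obtains z where "1 < z" "Z = of_real z" "fibre_level z = c"
proof -
  have "Z \<noteq> 0"
    using assms(1) by auto
  then have "(Z - 1)^2 / Z = Z + inverse Z - 2"
    by (simp add: field_simps power2_eq_square)
  moreover have "Im ((Z - 1)^2 / Z) = 0"
    using Im_eq_0_if_square_nonneg[OF assms(2)] assms(3) by simp
  ultimately have "Im (Z + inverse Z) = 0"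
    by simp
  then have "Im Z = 0"
    using assms(1) by (intro Im_eq_0_if_Im_add_inverse_eq_0[of Z]) auto
  define z where "z = Re Z"
  have Z: "Z = of_real z"
    by (simp add: complex_eq_iff z_def \<open>Im Z = 0\<close>)
  have "of_real (((z - 1)^2 / z)^2) = (of_real (16 * c) :: complex)"
    using assms(2) unfolding Z by simp
  then have sq: "((z - 1)^2 / z)^2 = 16 * c"
    by (simp only: of_real_eq_iff)
  have "1 < \<bar>z\<bar>"
    using assms(1) unfolding Z by simp
  moreover have "((z - 1)^2 / z)^2 \<le> 16"
    using sq assms(4) by simp
  ultimately have "1 < z"
    by (rule one_less_if_sq_quotient_le)
  moreover have "fibre_level z = c"
    using sq by (simp add: fibre_level_def power_divide field_simps)
  ultimately show ?thesis
    using Z that by blast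
qed

lemma circle_param_0: "circle_param 0 = -1"
  by (simp add: circle_param_def Complex_eq)

lemma neg_notin_nonpos_Reals:
  fixes x :: complex
  assumes "norm x = 1" "x \<noteq> 1"
  shows "- x \<notin> \<real>\<^sub>\<le>\<^sub>0"
proof
  assume "- x \<in> \<real>\<^sub>\<le>\<^sub>0"
  then have "x = of_real (Re x)" "0 \<le> Re x"
    by (auto simp: complex_nonpos_Reals_iff complex_eq_iff)
  then show False
    using assms by (metis abs_of_nonneg norm_of_real of_real_1)
qed

definition circle_coords :: "complex \<times> complex \<times> complex \<Rightarrow> real \<times> real \<times> real" where
  "circle_coords = (\<lambda>(x, y, Z). (Re Z, Im (csqrt (- x)), Im (csqrt (- y))))"

definition circle_point :: "real \<times> real \<times> real \<Rightarrow> complex \<times> complex \<times> complex" where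
  "circle_point = (\<lambda>(z, p, q). (circle_param p, circle_param q, of_real z))"

lemma circle_coords_mem:
  assumes "e \<in> D_Q - {(-1, -1, of_real z_crit)}"
  shows "circle_coords e \<in> (SIGMA z:{1<..<z_crit}. level (fibre_level z))"
    "circle_point (circle_coords e) = e" "of_real (fst (circle_coords e)) = snd (snd e)"
proof -
  obtain x y Z where e: "e = (x, y, Z)" "(x, y, Z) \<in> D_Q" "(x, y, Z) \<noteq> (-1, -1, of_real z_crit)"
    using assms by (cases e) auto
  have D: "Q x y Z = 0" "norm x = 1" "norm y = 1" "1 < norm Z"
    using e(2) by (simp_all add: D_Q_def)
  define p q where "p = Im (csqrt (- x))" and "q = Im (csqrt (- y))"
  have p: "p^2 < 1" "circle_param p = x" and q: "q^2 < 1" "circle_param q = y"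
    using circle_param_Im_csqrt D(2,3) D_Q_ne_one[OF e(2)] unfolding p_def q_def by auto
  define c where "c = (1 - p^2) * (1 - q^2)"
  have pq: "(p, q) \<in> level c"
    using p q by (simp add: level_def c_def)
  have sq: "((Z - 1)^2 / Z)^2 = of_real (16 * c)"
    using D(1) Q_circle_param_eq_0_iff[of p q Z] p q by (simp add: c_def)
  have "0 \<le> c" "c \<le> 1"
    using level_bounds[OF pq] by simp_all
  then obtain z where z: "1 < z" "Z = of_real z" "fibre_level z = c"
    by (rule real_base_point[OF D(4) sq])
  have "(p, q) \<noteq> (0, 0)"
  proof
    assume "(p, q) = (0, 0)"
    then have "x = -1" "y = -1" "z = z_crit"
      using p q z fibre_level_eq_one_iff[OF z(1)] by (simp_all add: circle_param_0 c_def)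
    then show False
      using e(3) z by simp
  qed
  then have "z < z_crit"
    using less_z_crit_if_mem_level z pq by simp
  moreover have "circle_coords (x, y, Z) = (z, p, q)"
    unfolding circle_coords_def p_def q_def using z by simp
  ultimately show "circle_coords e \<in> (SIGMA z:{1<..<z_crit}. level (fibre_level z))"
    "circle_point (circle_coords e) = e" "of_real (fst (circle_coords e)) = snd (snd e)"
    using e(1) z pq p q by (simp_all add: circle_point_def)
qed

lemma circle_point_mem:
  assumes "t \<in> (SIGMA z:{1<..<z_crit}. level (fibre_level z))"
  shows "circle_point t \<in> D_Q - {(-1, -1, of_real z_crit)}" "circle_coords (circle_point t) = t"
proof -
  obtain z p q where t: "t = (z, p, q)" "1 < z" "z < z_crit" "(p, q) \<in> level (fibre_level z)"
    using assms by auto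
  then have pq: "p^2 < 1" "q^2 < 1" "(1 - p^2) * (1 - q^2) = fibre_level z"
    by (simp_all add: level_def)
  have "((of_real z - 1)^2 / of_real z)^2 = (of_real (((z - 1)^2 / z)^2) :: complex)"
    by simp
  also have "((z - 1)^2 / z)^2 = 16 * fibre_level z"
    by (simp add: fibre_level_def power_divide power_mult_distrib)
  finally have "((of_real z - 1)^2 / of_real z)^2 = (of_real (16 * fibre_level z) :: complex)" .
  then have "Q (circle_param p) (circle_param q) (of_real z) = 0"
    using Q_circle_param_eq_0_iff[of p q] pq by simp
  moreover have "norm (circle_param p) = 1" "norm (circle_param q) = 1"
    using pq by (simp_all add: norm_circle_param)
  ultimately show "circle_point t \<in> D_Q - {(-1, -1, of_real z_crit)}"
    using t by (auto simp: D_Q_def circle_point_def)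
  have "Im (csqrt (- circle_param p)) = p" "Im (csqrt (- circle_param q)) = q"
    using csqrt_neg_circle_param pq(1,2) by simp_all
  then show "circle_coords (circle_point t) = t"
    using t by (simp add: circle_coords_def circle_point_def)
qed

lemma homeomorphism_circle_coords:
  "homeomorphism (D_Q - {(-1, -1, of_real z_crit)}) (SIGMA z:{1<..<z_crit}. level (fibre_level z))
     circle_coords circle_point"
proof (rule homeomorphismI)
  show "circle_coords ` (D_Q - {(-1, -1, of_real z_crit)}) \<subseteq> (SIGMA z:{1<..<z_crit}. level (fibre_level z))"
    by (rule image_subsetI) (rule circle_coords_mem(1))
  show "circle_point ` (SIGMA z:{1<..<z_crit}. level (fibre_level z)) \<subseteq> D_Q - {(-1, -1, of_real z_crit)}"
    by (rule image_subsetI) (rule circle_point_mem(1))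
  show "circle_point (circle_coords e) = e" if "e \<in> D_Q - {(-1, -1, of_real z_crit)}" for e
    using circle_coords_mem(2)[OF that] .
  show "circle_coords (circle_point t) = t" if "t \<in> (SIGMA z:{1<..<z_crit}. level (fibre_level z))" for t
    using circle_point_mem(2)[OF that] .
  show "continuous_on (SIGMA z:{1<..<z_crit}. level (fibre_level z)) circle_point"
    unfolding circle_point_def circle_param_def split_beta by (intro continuous_intros)
  have "- x \<notin> \<real>\<^sub>\<le>\<^sub>0" "- y \<notin> \<real>\<^sub>\<le>\<^sub>0" if "(x, y, Z) \<in> D_Q" for x y Z
    using that D_Q_ne_one[OF that] neg_notin_nonpos_Reals by (auto simp: D_Q_def)
  then show "continuous_on (D_Q - {(-1, -1, of_real z_crit)}) circle_coords"
    unfolding circle_coords_def split_beta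
    by (intro continuous_intros continuous_on_compose2[OF continuous_on_csqrt]) force+
qed

lemma homeomorphism_of_real_embedding:
  "homeomorphism (I \<times> L)
     (complex_of_real ` I \<times> (\<lambda>(a, b). (complex_of_real a, complex_of_real b, 0 :: complex)) ` L)
     (\<lambda>(z, a, b). (of_real z, of_real a, of_real b, 0)) (\<lambda>(Z, A, B, C). (Re Z, Re A, Re B))"
  by (rule homeomorphismI) (auto simp: split_beta intro!: continuous_intros)

theorem lemma9p3:
  shows "locally_trivial_fibration
           (D_Q - {(-1, -1, complex_of_real (3 + 2 * sqrt 2))})
           (\<lambda>(x, y, Z). Z)
           (complex_of_real ` {1 <..< 3 + 2 * sqrt 2})"
proof -
  \<comment> \<open>Any level in (0, 1) can serve as the model fibre.\<close>
  define F where "F = (\<lambda>(a, b). (complex_of_real a, complex_of_real b, 0 :: complex)) ` level (1/4)"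
  have "continuous_on {1<..<z_crit} fibre_level"
    unfolding fibre_level_def by (intro continuous_intros) auto
  moreover have "0 < fibre_level z \<and> fibre_level z < 1" if "z \<in> {1<..<z_crit}" for z
    using that fibre_level_pos fibre_level_less_one_iff by auto
  ultimately have flatten: "homeomorphism (SIGMA z:{1<..<z_crit}. level (fibre_level z)) ({1<..<z_crit} \<times> level (1/4))
      (\<lambda>(z, v). (z, rescale ((1 - 1/4) / (1 - fibre_level z)) v))
      (\<lambda>(z, v). (z, rescale ((1 - fibre_level z) / (1 - 1/4)) v))"
    by (rule homeomorphism_rescale_levels) simp_all
  note trivialisation = homeomorphism_compose[OF homeomorphism_compose[OF homeomorphism_circle_coords flatten]
      homeomorphism_of_real_embedding, folded F_def]
  have "(0, sqrt 3 / 2) \<in> level (1/4)"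
    by (simp add: level_def power_divide)
  then have "F \<noteq> {}"
    unfolding F_def by blast
  show ?thesis
    unfolding z_crit_def[symmetric]
    by (rule homeomorphism_imp_locally_trivial_fibration[OF trivialisation _ \<open>F \<noteq> {}\<close>])
      (simp add: split_beta circle_coords_mem(3))
qed

end
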